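(* Let $X$ be an extremally disconnected topological space satisfying $S_1(s\mathcal{O},s\mathcal{O})$. Let $\mathcal{V}_1,\mathcal{V}_2,\dots$ be nonempty finite families of semi-open subsets of $X$ such that for each $x\in X$ we have $x\in\bigcup\mathcal{V}_n$ for infinitely many $n$. Then there are $U_1\in\mathcal{V}_1, U_2\in\mathcal{V}_2,\dots$ such that $\{U_1,U_2,\dots\}$ covers $X$.
   Context: A subset $A$ of a topological space $X$ is semi-open if $A\subseteq \mathrm{Cl}(\mathrm{Int}(A))$; a semi-open cover is a cover by semi-open sets. A space is extremally disconnected if the closure of every open set is open. $X$ satisfies $S_1(s\mathcal{O},s\mathcal{O})$ (is semi-Rothberger) if for each sequence $\langle\mathcal{U}_n:n\in\omega\rangle$ of semi-open covers of $X$ there are $U_n\in\mathcal{U}_n$ ($n\in\omega$) with $\{U_n:n\in\omega\}$ a cover of $X$. *)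

theory Defs
  imports "HOL-Analysis.Analysis"
begin

definition semi_open :: "'a topology \<Rightarrow> 'a set \<Rightarrow> bool" where
  "semi_open X A \<longleftrightarrow> A \<subseteq> topspace X \<and> A \<subseteq> X closure_of (X interior_of A)"

definition semi_open_cover :: "'a topology \<Rightarrow> 'a set set \<Rightarrow> bool" where
  "semi_open_cover X \<U> \<longleftrightarrow> (\<forall>U\<in>\<U>. semi_open X U) \<and> topspace X \<subseteq> \<Union>\<U>"

definition extremally_disconnected :: "'a topology \<Rightarrow> bool" where
  "extremally_disconnected X \<longleftrightarrow> (\<forall>U. openin X U \<longrightarrow> openin X (X closure_of U))"

definition semi_Rothberger :: "'a topology \<Rightarrow> bool" where
  "semi_Rothberger X \<longleftrightarrow>
     (\<forall>\<U> :: nat \<Rightarrow> 'a set set. (\<forall>n. semi_open_cover X (\<U> n)) \<longrightarrow>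
        (\<exists>U. (\<forall>n. U n \<in> \<U> n) \<and> topspace X \<subseteq> (\<Union>n. U n)))"

end

theory Submission
  imports Defs
begin

text \<open>
  In an extremally disconnected space finite intersections of semi-open sets are semi-open.
  Since every point lies in \<open>\<Union>(\<V> n)\<close> for infinitely many n, the intersections
  \<open>V\<^sub>0 \<inter> \<dots> \<inter> V\<^sub>k\<close> with \<open>V\<^sub>i \<in> \<V> n\<^sub>i\<close> for k + 1 distinct indices \<open>n\<^sub>i\<close>
  form a semi-open cover for every k. The semi-Rothberger property picks one such
  intersection \<open>W\<^sub>k\<close> from the k-th cover; as \<open>W\<^sub>k\<close> offers k + 1 indices, one of them,
  \<open>r k\<close>, can be chosen so that r is injective, and the factor of \<open>W\<^sub>k\<close> at \<open>r k\<close>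
  (a superset of \<open>W\<^sub>k\<close>) is selected from \<open>\<V> (r k)\<close>.
\<close>

lemma extremally_disconnected_closure_of_Int:
  assumes ed: "extremally_disconnected X" and U: "openin X U" and V: "openin X V"
  shows "X closure_of U \<inter> X closure_of V \<subseteq> X closure_of (U \<inter> V)"
proof -
  have "openin X (X closure_of U)"
    using ed U unfolding extremally_disconnected_def by blast
  then have "X closure_of U \<inter> X closure_of V \<subseteq> X closure_of (V \<inter> X closure_of U)"
    using openin_Int_closure_of_subset by (metis Int_commute)
  also have "\<dots> = X closure_of (V \<inter> U)"
    by (rule closure_of_openin_Int_closure_of[OF V])
  finally show ?thesis by (simp add: Int_commute)
qed

lemma semi_open_Int:
  assumes ed: "extremally_disconnected X" and A: "semi_open X A" and B: "semi_open X B"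
  shows "semi_open X (A \<inter> B)"
proof -
  have "A \<inter> B \<subseteq> X closure_of (X interior_of A) \<inter> X closure_of (X interior_of B)"
    using A B unfolding semi_open_def by blast
  also have "\<dots> \<subseteq> X closure_of (X interior_of A \<inter> X interior_of B)"
    by (rule extremally_disconnected_closure_of_Int[OF ed]) auto
  also have "\<dots> = X closure_of (X interior_of (A \<inter> B))"
    by (simp add: interior_of_Int)
  finally show ?thesis
    using A unfolding semi_open_def by blast
qed

lemma semi_open_Inter:
  assumes ed: "extremally_disconnected X" and "finite F" "F \<noteq> {}"
    and "\<And>A. A \<in> F \<Longrightarrow> semi_open X A"
  shows "semi_open X (\<Inter>F)"
  using assms(2-4)
  by (induction F rule: finite_ne_induct) (auto intro: semi_open_Int[OF ed])

lemma distinct_representatives_nat: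
  assumes "\<And>k. k < card (F k)"
  shows "\<exists>r. inj r \<and> (\<forall>k. r k \<in> F k)"
proof -
  have "\<exists>r. \<forall>k. r k \<in> F k - r ` {..<k}"
  proof (rule dependent_wellorder_choice)
    fix f g :: "nat \<Rightarrow> 'a" and k r
    assume "\<And>i. i < k \<Longrightarrow> f i = g i"
    then have "f ` {..<k} = g ` {..<k}"
      by (intro image_cong) auto
    then show "(r \<in> F k - f ` {..<k}) = (r \<in> F k - g ` {..<k})"
      by simp
  next
    fix k :: nat and r :: "nat \<Rightarrow> 'a"
    have "card (r ` {..<k}) < card (F k)"
      using assms[of k] card_image_le[of "{..<k}" r] by simp
    then have "\<not> F k \<subseteq> r ` {..<k}"
      using card_mono[of "r ` {..<k}" "F k"] by auto
    then show "\<exists>x. x \<in> F k - r ` {..<k}"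
      by blast
  qed
  then obtain r where r: "\<And>k. r k \<in> F k" "\<And>i k. i < k \<Longrightarrow> r k \<noteq> r i"
    by blast
  have "inj r"
  proof (rule injI)
    fix i j assume "r i = r j"
    then show "i = j"
      by (cases i j rule: linorder_cases) (auto dest: r(2))
  qed
  then show ?thesis
    using r(1) by blast
qed

definition selection_Inters :: "(nat \<Rightarrow> 'a set set) \<Rightarrow> nat \<Rightarrow> 'a set set" where
  "selection_Inters \<V> k = {\<Inter>(c ` F) | F c. card F = Suc k \<and> (\<forall>n\<in>F. c n \<in> \<V> n)}"

lemma semi_open_cover_selection_Inters:
  assumes ed: "extremally_disconnected X"
    and semi_open: "\<And>n V. V \<in> \<V> n \<Longrightarrow> semi_open X V"
    and often: "\<And>x. x \<in> topspace X \<Longrightarrow> infinite {n. x \<in> \<Union>(\<V> n)}"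
  shows "semi_open_cover X (selection_Inters \<V> k)"
  unfolding semi_open_cover_def
proof safe
  fix W assume "W \<in> selection_Inters \<V> k"
  then obtain F c where W: "W = \<Inter>(c ` F)" "card F = Suc k" "\<forall>n\<in>F. c n \<in> \<V> n"
    unfolding selection_Inters_def by blast
  then have "finite F" "F \<noteq> {}"
    using card.infinite by fastforce+
  then show "semi_open X W"
    unfolding W(1) using W(3) by (intro semi_open_Inter[OF ed]) (auto intro: semi_open)
next
  fix x assume "x \<in> topspace X"
  then obtain F where F: "F \<subseteq> {n. x \<in> \<Union>(\<V> n)}" "card F = Suc k"
    using infinite_arbitrarily_large[OF often] by blast
  then have "\<forall>n\<in>F. \<exists>V. V \<in> \<V> n \<and> x \<in> V"
    by blast
  then obtain c where c: "\<And>n. n \<in> F \<Longrightarrow> c n \<in> \<V> n \<and> x \<in> c n"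
    by metis
  then have "\<Inter>(c ` F) \<in> selection_Inters \<V> k"
    unfolding selection_Inters_def using F(2) by blast
  moreover have "x \<in> \<Inter>(c ` F)" using c by blast
  ultimately show "x \<in> \<Union>(selection_Inters \<V> k)" by blast
qed

lemma selection_covering_selection_Inters:
  assumes nonempty: "\<And>n. \<V> n \<noteq> {}"
    and W: "\<And>k. W k \<in> selection_Inters \<V> k"
  shows "\<exists>U. (\<forall>n. U n \<in> \<V> n) \<and> (\<forall>k. \<exists>n. W k \<subseteq> U n)"
proof -
  obtain F C where FC: "\<And>k. W k = \<Inter>(C k ` F k)" "\<And>k. card (F k) = Suc k"
    "\<And>k n. n \<in> F k \<Longrightarrow> C k n \<in> \<V> n"
  proof -
    have "\<forall>k. \<exists>F C. W k = \<Inter>(C ` F) \<and> card F = Suc k \<and> (\<forall>n\<in>F. C n \<in> \<V> n)"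
      using W unfolding selection_Inters_def by blast
    then show ?thesis using that by metis
  qed
  obtain r where r: "inj r" "\<And>k. r k \<in> F k"
    using distinct_representatives_nat[of F] FC(2) by auto
  define U where "U n = (if n \<in> range r then C (inv r n) n else (SOME V. V \<in> \<V> n))" for n
  have U_r: "U (r k) = C k (r k)" for k
    unfolding U_def using r(1) by simp
  have "U n \<in> \<V> n" for n
  proof (cases "n \<in> range r")
    case True
    then show ?thesis using U_r FC(3) r(2) by auto
  next
    case False
    then show ?thesis unfolding U_def using nonempty[of n] by (simp add: some_in_eq)
  qed
  moreover have "W k \<subseteq> U (r k)" for k
    using FC(1) r(2) U_r by auto
  ultimately show ?thesis by blast
qed

theorem lemma6:
  fixes X :: "'a topology" and \<V> :: "nat \<Rightarrow> 'a set set"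
  assumes "extremally_disconnected X"
    and "semi_Rothberger X"
    and "\<And>n. finite (\<V> n)"
    and "\<And>n. \<V> n \<noteq> {}"
    and "\<And>n V. V \<in> \<V> n \<Longrightarrow> semi_open X V"
    and "\<And>x. x \<in> topspace X \<Longrightarrow> infinite {n. x \<in> \<Union>(\<V> n)}"
  shows "\<exists>U. (\<forall>n. U n \<in> \<V> n) \<and> topspace X \<subseteq> (\<Union>n. U n)"
proof -
  have "semi_open_cover X (selection_Inters \<V> k)" for k
    by (rule semi_open_cover_selection_Inters) (fact assms)+
  then obtain W where W: "\<And>k. W k \<in> selection_Inters \<V> k" "topspace X \<subseteq> (\<Union>k. W k)"
    using assms(2) unfolding semi_Rothberger_def by blast
  obtain U where U: "\<And>n. U n \<in> \<V> n" "\<And>k. \<exists>n. W k \<subseteq> U n"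
    using selection_covering_selection_Inters[OF assms(4) W(1)] by blast
  have "topspace X \<subseteq> (\<Union>n. U n)"
    using W(2) U(2) by blast
  then show ?thesis using U(1) by blast
qed

end
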